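(* In the setting below, there is a constant $C$ independent of $t\in(0,1)$ such that $\varphi_t(u)\ge\bar\phi(u)-C\,\mathrm{dist}(u,\partial U)^{1/2}$ for all $u\in U_t$.
   Context: $n\ge3$; $p_1,\dots,p_n\in\mathbb{R}^2$ are the vertices, in counterclockwise order, of a convex polygon with interior $U$; indices mod $n$. $A\ge0$ and $V(u)=A+\sum_{i=1}^n\frac{1}{2|u-p_i|}$ on $U$. Given $b_1,\dots,b_n\in\mathbb{R}$, the boundary data on $\partial U$ is the function equal to $b_i$ at $p_i$ and affine linear on each edge $[p_i,p_{i+1}]$; $\bar\phi$ is a Lipschitz function on $\overline U$ extending it. $(U_t)_{t\in(0,1)}$ is a smooth expanding one-parameter family of strictly convex smooth domains $U_t\subset U$ converging to $U$ as $t\to1$. For each $t$, $\varphi_t\in C(\overline{U_t})$ is the unique convex function with Monge–Ampère measure $\det D^2\varphi_t=V\,du_1du_2$ on $U_t$ (in the Alexandrov sense) and $\varphi_t=\bar\phi$ on $\partial U_t$. *)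

theory Defs
  imports "HOL-Analysis.Analysis"
begin

fun ck_on :: "nat \<Rightarrow> 'a::real_normed_vector set \<Rightarrow> ('a \<Rightarrow> real) \<Rightarrow> bool" where
  "ck_on 0 S f = continuous_on S f"
| "ck_on (Suc k) S f = (continuous_on S f \<and> f differentiable_on S \<and>
      (\<forall>v. ck_on k S (\<lambda>x. frechet_derivative f (at x) v)))"

definition smooth_on :: "'a::real_normed_vector set \<Rightarrow> ('a \<Rightarrow> real) \<Rightarrow> bool" where
  "smooth_on S f \<longleftrightarrow> (\<forall>k. ck_on k S f)"

definition cross2 :: "real^2 \<Rightarrow> real^2 \<Rightarrow> real" where
  "cross2 a b = a$1 * b$2 - a$2 * b$1"

text \<open>p 0, ..., p (n-1) are the vertices, in counterclockwise order, of a convex polygon: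
  every other vertex lies strictly to the left of each directed edge.\<close>
definition ccw_convex_polygon :: "nat \<Rightarrow> (nat \<Rightarrow> real^2) \<Rightarrow> bool" where
  "ccw_convex_polygon n p \<longleftrightarrow> 3 \<le> n \<and>
     (\<forall>i<n. \<forall>j<n. j \<noteq> i \<and> j \<noteq> Suc i mod n \<longrightarrow>
        cross2 (p (Suc i mod n) - p i) (p j - p i) > 0)"

definition polygon_interior :: "nat \<Rightarrow> (nat \<Rightarrow> real^2) \<Rightarrow> (real^2) set" where
  "polygon_interior n p = interior (convex hull (p ` {..<n}))"

definition potential :: "nat \<Rightarrow> (nat \<Rightarrow> real^2) \<Rightarrow> real \<Rightarrow> real^2 \<Rightarrow> real" where
  "potential n p A u = A + (\<Sum>i<n. 1 / (2 * norm (u - p i)))"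

definition extends_boundary_data :: "nat \<Rightarrow> (nat \<Rightarrow> real^2) \<Rightarrow> (nat \<Rightarrow> real) \<Rightarrow> (real^2 \<Rightarrow> real) \<Rightarrow> bool" where
  "extends_boundary_data n p b phibar \<longleftrightarrow>
     (\<forall>i<n. \<forall>s\<in>{0..1}. phibar (p i + s *\<^sub>R (p (Suc i mod n) - p i))
                          = (1 - s) * b i + s * b (Suc i mod n))"

definition strictly_convex_domain :: "(real^2) set \<Rightarrow> bool" where
  "strictly_convex_domain D \<longleftrightarrow> open D \<and> convex D \<and>
     (\<forall>x\<in>closure D. \<forall>y\<in>closure D. x \<noteq> y \<longrightarrow> open_segment x y \<subseteq> D)"

definition smooth_expanding_family :: "(real \<Rightarrow> (real^2) set) \<Rightarrow> (real^2) set \<Rightarrow> bool" where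
  "smooth_expanding_family Ut U \<longleftrightarrow>
     (\<exists>G :: real \<times> (real^2) \<Rightarrow> real.
        smooth_on ({0<..<1} \<times> UNIV) G \<and>
        (\<forall>t\<in>{0<..<1}. Ut t = {x. G (t, x) < 0}) \<and>
        (\<forall>t\<in>{0<..<1}. \<forall>x. G (t, x) = 0 \<longrightarrow>
            (\<exists>v. frechet_derivative (\<lambda>y. G (t, y)) (at x) v \<noteq> 0))) \<and>
     (\<forall>t\<in>{0<..<1}. strictly_convex_domain (Ut t) \<and> Ut t \<subseteq> U) \<and>
     (\<forall>s\<in>{0<..<1}. \<forall>t\<in>{0<..<1}. s \<le> t \<longrightarrow> Ut s \<subseteq> Ut t) \<and>
     (\<Union>t\<in>{0<..<1}. Ut t) = U"

definition subdiff :: "(real^2 \<Rightarrow> real) \<Rightarrow> (real^2) set \<Rightarrow> real^2 \<Rightarrow> (real^2) set" where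
  "subdiff phi D x = {q. \<forall>z\<in>D. phi z \<ge> phi x + q \<bullet> (z - x)}"

text \<open>Alexandrov sense: det D^2 phi = V du on D, i.e. the Monge-Ampere measure
  E \<mapsto> |subdiff phi (E)| equals the measure with density V on Borel subsets of D.\<close>
definition alexandrov_MA :: "(real^2 \<Rightarrow> real) \<Rightarrow> (real^2 \<Rightarrow> real) \<Rightarrow> (real^2) set \<Rightarrow> bool" where
  "alexandrov_MA phi V D \<longleftrightarrow>
     (\<forall>E \<in> sets borel. E \<subseteq> D \<longrightarrow>
        emeasure lebesgue (\<Union>x\<in>E. subdiff phi D x) = (\<integral>\<^sup>+ x\<in>E. ennreal (V x) \<partial>lebesgue))"

end

theory Submission
  imports Defs
begin

text \<open>Fix \<open>t\<close> and \<open>u \<in> U\<^sub>t\<close>, let \<open>y\<close> be a nearest point of \<open>\<partial>U\<close> and \<open>d = \<bar>u - y\<bar>\<close>.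
  Since the boundary data are affine on each edge and \<open>phibar\<close> is Lipschitz, the affine extension of
  the data on an edge through \<open>y\<close>, lowered by a multiple of the distance to the line of that edge,
  is an affine \<open>\<ell> \<le> phibar\<close> on \<open>closure U\<close> with \<open>\<ell> u \<ge> phibar u - K d\<close>; convexity of the polygon
  keeps the distance to an edge comparable to the distance to its line, so \<open>K\<close> is uniform.
  On \<open>\<partial>U\<^sub>t\<close> we have \<open>phi t = phibar \<ge> \<ell>\<close>. If \<open>phi t u = \<ell> u - h\<close>, Alexandrov's argument shows that
  all slopes in a rectangle of area \<open>h\<^sup>2/(8dD)\<close> are subgradients of \<open>phi t\<close> at points of \<open>U\<^sub>t\<close>,
  where \<open>D\<close> is the diameter of \<open>U\<close> and \<open>d\<close> bounds the width of \<open>U\<^sub>t\<close> seen from \<open>u\<close> in the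
  direction of \<open>y\<close>. That image has measure \<open>\<integral>\<^bsub>U\<^sub>t\<^esub> V \<le> \<integral>\<^bsub>U\<^esub> V = M < \<infinity>\<close>, the
  singularities \<open>1/\<bar>x - p\<^sub>i\<bar>\<close> of \<open>V\<close> being integrable in the plane. Hence \<open>h \<le> \<surd>(8DMd)\<close> and
  \<open>phi t u \<ge> phibar u - K d - \<surd>(8DMd) \<ge> phibar u - (K \<surd>D + \<surd>(8DM)) \<surd>d\<close>.\<close>

section \<open>Planar cross product\<close>

definition rot90 :: "real^2 \<Rightarrow> real^2" where
  "rot90 a = vector [- a$2, a$1]"

lemma inner_real2: "(a::real^2) \<bullet> b = a$1 * b$1 + a$2 * b$2"
  by (simp add: inner_vec_def sum_2)

lemma cross2_eq_inner_rot90: "cross2 a b = rot90 a \<bullet> b"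
  by (simp add: cross2_def rot90_def inner_real2)

lemma norm_rot90 [simp]: "norm (rot90 a) = norm a"
  by (simp add: norm_eq_sqrt_inner inner_real2 rot90_def add.commute)

lemma cross2_commute: "cross2 a b = - cross2 b a"
  by (simp add: cross2_def)

lemma cross2_self [simp]: "cross2 a a = 0"
  and cross2_zero_left [simp]: "cross2 0 a = 0"
  and cross2_zero_right [simp]: "cross2 a 0 = 0"
  by (simp_all add: cross2_def)

lemma cross2_add_right: "cross2 a (b + c) = cross2 a b + cross2 a c"
  and cross2_diff_right: "cross2 a (b - c) = cross2 a b - cross2 a c"
  and cross2_scaleR_right: "cross2 a (s *\<^sub>R b) = s * cross2 a b"
  by (simp_all add: cross2_def algebra_simps)

lemma cross2_inner_lagrange: "(a \<bullet> b)\<^sup>2 + (cross2 a b)\<^sup>2 = (norm a)\<^sup>2 * (norm b)\<^sup>2"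
  unfolding power2_norm_eq_inner by (simp add: inner_real2 cross2_def power2_eq_square algebra_simps)

lemma abs_cross2_le: "\<bar>cross2 a b\<bar> \<le> norm a * norm b"
  by (metis cross2_eq_inner_rot90 Cauchy_Schwarz_ineq2 norm_rot90)

lemma abs_cross2_orthogonal:
  assumes "a \<bullet> b = 0" shows "\<bar>cross2 a b\<bar> = norm a * norm b"
proof -
  have "(cross2 a b)\<^sup>2 = (norm a * norm b)\<^sup>2"
    using cross2_inner_lagrange[of a b] assms by (simp add: power_mult_distrib)
  then show ?thesis by (metis real_sqrt_abs abs_of_nonneg norm_ge_zero zero_le_mult_iff)
qed

lemma cross2_decomposition:
  "cross2 f e *\<^sub>R v = cross2 f v *\<^sub>R e - cross2 e v *\<^sub>R f"
  by (simp add: vec_eq_iff forall_2 cross2_def algebra_simps)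

text \<open>The hypotheses place \<open>v\<close> in the sector at a polygon vertex between the line of \<open>e\<close> and
  the adjacent edge \<open>f\<close>; there the distance \<open>cross2 e v / \<bar>e\<bar>\<close> of \<open>v\<close> from the line of \<open>e\<close>
  controls \<open>\<bar>v\<bar>\<close>.\<close>
lemma norm_le_cross2_in_cone:
  assumes fe: "cross2 f e \<noteq> 0" and ve: "cross2 f e * (v \<bullet> e) \<le> 0"
    and fv: "0 \<le> cross2 f v" and ev: "0 \<le> cross2 e v"
  shows "\<bar>cross2 f e\<bar> * norm v \<le> 2 * norm f * cross2 e v"
proof -
  have e0: "e \<noteq> 0" using fe by (auto simp: cross2_def)
  have "cross2 f v * (e \<bullet> e) = cross2 f e * (v \<bullet> e) + cross2 e v * (f \<bullet> e)"
    by (simp add: cross2_def inner_real2 algebra_simps)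
  also have "\<dots> \<le> cross2 e v * (norm f * norm e)"
    using ve mult_left_mono[OF norm_cauchy_schwarz[of f e] ev] by linarith
  finally have "(cross2 f v * norm e) * norm e \<le> (cross2 e v * norm f) * norm e"
    by (simp add: power2_norm_eq_inner[symmetric] power2_eq_square ac_simps)
  then have fv_le: "cross2 f v * norm e \<le> cross2 e v * norm f"
    using e0 by simp
  have "\<bar>cross2 f e\<bar> * norm v = norm (cross2 f v *\<^sub>R e - cross2 e v *\<^sub>R f)"
    by (simp flip: cross2_decomposition)
  also have "\<dots> \<le> cross2 f v * norm e + cross2 e v * norm f"
    using norm_triangle_ineq4[of "cross2 f v *\<^sub>R e" "cross2 e v *\<^sub>R f"] fv ev by simp
  also have "\<dots> \<le> 2 * norm f * cross2 e v"
    using fv_le by (simp add: algebra_simps)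
  finally show ?thesis .
qed

section \<open>Convex polygons\<close>

definition polygon_edge :: "nat \<Rightarrow> (nat \<Rightarrow> real^2) \<Rightarrow> nat \<Rightarrow> real^2" where
  "polygon_edge n p i = p (Suc i mod n) - p i"

text \<open>\<open>edge_cross n p i z\<close> is \<open>\<bar>polygon_edge n p i\<bar>\<close> times the signed distance from \<open>z\<close> to the
  line of edge \<open>i\<close>, positive on the side of the polygon.\<close>
definition edge_cross :: "nat \<Rightarrow> (nat \<Rightarrow> real^2) \<Rightarrow> nat \<Rightarrow> real^2 \<Rightarrow> real" where
  "edge_cross n p i z = cross2 (polygon_edge n p i) (z - p i)"

lemma ccw_convex_polygon_ge_3: "ccw_convex_polygon n p \<Longrightarrow> 3 \<le> n"
  by (simp add: ccw_convex_polygon_def)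

lemma ccw_convex_polygon_vertex_left:
  "ccw_convex_polygon n p \<Longrightarrow> i < n \<Longrightarrow> j < n \<Longrightarrow> j \<noteq> i \<Longrightarrow> j \<noteq> Suc i mod n
    \<Longrightarrow> 0 < edge_cross n p i (p j)"
  by (simp add: ccw_convex_polygon_def edge_cross_def polygon_edge_def)

lemma Suc_Suc_mod_neq:
  assumes "3 \<le> n" "i < n"
  shows "Suc (Suc i mod n) mod n \<noteq> i" "Suc (Suc i mod n) mod n \<noteq> Suc i mod n"
  using assms by (auto simp: mod_Suc split: if_splits)

lemma exists_prev_index: "i < (n::nat) \<Longrightarrow> \<exists>k<n. Suc k mod n = i"
  by (cases i) (auto intro: exI[of _ "n - 1"] exI[of _ "i - 1"])

lemma edge_cross_affine:
  "edge_cross n p i z = rot90 (polygon_edge n p i) \<bullet> z - rot90 (polygon_edge n p i) \<bullet> p i"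
  by (simp add: edge_cross_def cross2_eq_inner_rot90 inner_diff_right)

lemma edge_cross_convex_hull_nonneg:
  assumes poly: "ccw_convex_polygon n p" and i: "i < n" and z: "z \<in> convex hull (p ` {..<n})"
  shows "0 \<le> edge_cross n p i z"
proof -
  have "p ` {..<n} \<subseteq> {z. 0 \<le> edge_cross n p i z}"
  proof clarify
    fix j assume "j < n"
    then show "0 \<le> edge_cross n p i (p j)"
      using ccw_convex_polygon_vertex_left[OF poly i, of j]
      by (cases "j = i \<or> j = Suc i mod n") (auto simp: edge_cross_def polygon_edge_def)
  qed
  moreover have "convex {z. 0 \<le> edge_cross n p i z}"
    unfolding edge_cross_affine by (simp add: convex_halfspace_ge)
  ultimately show ?thesis
    using z hull_minimal[of "p ` {..<n}" _ convex] by blast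
qed

lemma ccw_convex_polygon_turn_left:
  assumes poly: "ccw_convex_polygon n p" and i: "i < n"
  shows "0 < cross2 (polygon_edge n p i) (polygon_edge n p (Suc i mod n))"
proof -
  let ?j = "Suc (Suc i mod n) mod n"
  have n3: "3 \<le> n" by (rule ccw_convex_polygon_ge_3[OF poly])
  have "0 < edge_cross n p i (p ?j)"
    using ccw_convex_polygon_vertex_left[OF poly i] Suc_Suc_mod_neq[OF n3 i] i by simp
  moreover have "p ?j - p i = polygon_edge n p i + polygon_edge n p (Suc i mod n)"
    by (simp add: polygon_edge_def)
  ultimately show ?thesis
    by (simp add: edge_cross_def cross2_add_right)
qed

lemma polygon_edge_nonzero:
  "ccw_convex_polygon n p \<Longrightarrow> i < n \<Longrightarrow> polygon_edge n p i \<noteq> 0"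
  using ccw_convex_polygon_turn_left[of n p i] by auto

text \<open>Separate \<open>z\<close> from the hull by a functional \<open>a\<close> and take a vertex \<open>p j\<close> minimising \<open>a\<close>.
  Lying strictly left of the two edges at \<open>p j\<close>, \<open>z - p j\<close> is a positive combination of the
  outgoing edge and the reversed incoming edge, on both of which \<open>a\<close> is non-negative.\<close>
lemma strictly_left_of_edges_subset_convex_hull:
  assumes poly: "ccw_convex_polygon n p"
  shows "{z. \<forall>i<n. 0 < edge_cross n p i z} \<subseteq> convex hull (p ` {..<n})"
proof
  fix z assume z: "z \<in> {z. \<forall>i<n. 0 < edge_cross n p i z}"
  show "z \<in> convex hull (p ` {..<n})"
  proof (rule ccontr)
    assume "z \<notin> convex hull (p ` {..<n})"
    moreover have "closed (convex hull (p ` {..<n}))"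
      by (simp add: compact_imp_closed compact_convex_hull finite_imp_compact)
    ultimately obtain a \<beta> where a: "a \<bullet> z < \<beta>" "\<forall>x\<in>convex hull (p ` {..<n}). \<beta> < a \<bullet> x"
      using separating_hyperplane_closed_point[OF convex_convex_hull] by blast
    let ?vals = "(\<lambda>m. a \<bullet> p m) ` {..<n}"
    have fin: "finite ?vals" and ne: "?vals \<noteq> {}"
      using ccw_convex_polygon_ge_3[OF poly] by (auto simp: lessThan_empty_iff)
    obtain j where j: "j < n" "a \<bullet> p j = Min ?vals" using Min_in[OF fin ne] by auto
    then have jmin: "a \<bullet> p j \<le> a \<bullet> p m" if "m < n" for m
      using Min_le[OF fin] that by simp
    obtain k where k: "k < n" "Suc k mod n = j" using exists_prev_index[OF j(1)] by blast
    define e f v where "e = polygon_edge n p j" and "f = polygon_edge n p k" and "v = z - p j"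
    have fe: "0 < cross2 f e" using ccw_convex_polygon_turn_left[OF poly k(1)] k by (simp add: e_def f_def)
    have "edge_cross n p k z = cross2 f v"
      using k by (simp add: edge_cross_def f_def v_def polygon_edge_def cross2_def algebra_simps)
    then have fv: "0 < cross2 f v" using z k(1) by auto
    have ev: "0 < cross2 e v" using z j by (simp add: edge_cross_def e_def v_def)
    have "Suc j mod n < n" using j(1) by simp
    then have ae: "0 \<le> a \<bullet> e"
      using jmin[of "Suc j mod n"] by (simp add: e_def polygon_edge_def inner_diff_right)
    have af: "a \<bullet> f \<le> 0"
      using jmin[OF k(1)] k(2) by (simp add: f_def polygon_edge_def inner_diff_right)
    have "a \<bullet> (cross2 f e *\<^sub>R v) = cross2 f v * (a \<bullet> e) - cross2 e v * (a \<bullet> f)"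
      by (subst cross2_decomposition) (simp add: inner_diff_right)
    also have "\<dots> \<ge> 0"
      using mult_nonneg_nonneg[of "cross2 f v" "a \<bullet> e"] mult_nonneg_nonpos[of "cross2 e v" "a \<bullet> f"]
        fv ev ae af by linarith
    finally have "0 \<le> a \<bullet> v" using fe by (simp add: zero_le_mult_iff)
    moreover have "p j \<in> convex hull (p ` {..<n})" using j(1) by (simp add: hull_inc)
    ultimately show False using a by (force simp: v_def inner_diff_right)
  qed
qed

lemma open_strictly_left_of_edges: "open {z. \<forall>i<n. 0 < edge_cross n p i z}"
proof -
  have "{z. \<forall>i<n. 0 < edge_cross n p i z} =
      (\<Inter>i\<in>{..<n}. {z. rot90 (polygon_edge n p i) \<bullet> z > rot90 (polygon_edge n p i) \<bullet> p i})"
    by (auto simp: edge_cross_affine)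
  then show ?thesis by (simp add: open_INT open_halfspace_gt)
qed

lemma strictly_left_of_edges_subset_polygon_interior:
  "ccw_convex_polygon n p \<Longrightarrow> {z. \<forall>i<n. 0 < edge_cross n p i z} \<subseteq> polygon_interior n p"
  unfolding polygon_interior_def
  by (intro interior_maximal strictly_left_of_edges_subset_convex_hull open_strictly_left_of_edges)

lemma centroid_strictly_left_of_edges:
  assumes poly: "ccw_convex_polygon n p" and i: "i < n"
  shows "0 < edge_cross n p i ((1 / real n) *\<^sub>R (\<Sum>j<n. p j))"
proof -
  have n3: "3 \<le> n" by (rule ccw_convex_polygon_ge_3[OF poly])
  have "edge_cross n p i ((1 / real n) *\<^sub>R (\<Sum>j<n. p j)) = (\<Sum>j<n. edge_cross n p i (p j)) / real n"
    using n3 by (simp add: edge_cross_affine inner_sum_right sum_subtractf field_simps)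
  moreover have "0 < (\<Sum>j<n. edge_cross n p i (p j))"
  proof (rule sum_pos2)
    show "Suc (Suc i mod n) mod n \<in> {..<n}" using i by simp
    show "0 < edge_cross n p i (p (Suc (Suc i mod n) mod n))"
      using ccw_convex_polygon_vertex_left[OF poly i] Suc_Suc_mod_neq[OF n3 i] i by simp
    show "\<And>j. j \<in> {..<n} \<Longrightarrow> 0 \<le> edge_cross n p i (p j)"
      using edge_cross_convex_hull_nonneg[OF poly i] by (simp add: hull_inc)
  qed simp
  ultimately show ?thesis using n3 by simp
qed

lemma polygon_interior_nonempty: "ccw_convex_polygon n p \<Longrightarrow> polygon_interior n p \<noteq> {}"
  using strictly_left_of_edges_subset_polygon_interior centroid_strictly_left_of_edges by blast

lemma polygon_interior_open_bounded: "open (polygon_interior n p)" "bounded (polygon_interior n p)"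
  unfolding polygon_interior_def
  by (auto intro: bounded_subset[OF bounded_convex_hull[OF finite_imp_bounded] interior_subset])

lemma closure_polygon_interior:
  assumes "ccw_convex_polygon n p"
  shows "closure (polygon_interior n p) = convex hull (p ` {..<n})"
proof -
  have "closed (convex hull (p ` {..<n}))"
    by (simp add: compact_imp_closed compact_convex_hull finite_imp_compact)
  moreover have "closure (polygon_interior n p) = closure (convex hull (p ` {..<n}))"
    using convex_closure_interior[OF convex_convex_hull] polygon_interior_nonempty[OF assms]
    by (simp add: polygon_interior_def)
  ultimately show ?thesis by simp
qed

lemma frontier_polygon_interior_on_edge_line:
  assumes poly: "ccw_convex_polygon n p" and y: "y \<in> frontier (polygon_interior n p)"
  shows "y \<in> convex hull (p ` {..<n})" "\<exists>i<n. edge_cross n p i y = 0"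
proof -
  show hull: "y \<in> convex hull (p ` {..<n})"
    using y closure_polygon_interior[OF poly] by (simp add: frontier_def)
  have "y \<notin> polygon_interior n p"
    using y by (simp add: frontier_def polygon_interior_def)
  then obtain i where "i < n" "edge_cross n p i y \<le> 0"
    using strictly_left_of_edges_subset_polygon_interior[OF poly] by force
  then show "\<exists>i<n. edge_cross n p i y = 0"
    using edge_cross_convex_hull_nonneg[OF poly _ hull] by (metis order_antisym)
qed

lemma dist_start_vertex_le_edge_cross:
  assumes poly: "ccw_convex_polygon n p" and k: "k < n" "Suc k mod n = i"
    and z: "z \<in> convex hull (p ` {..<n})" and behind: "(z - p i) \<bullet> polygon_edge n p i \<le> 0"
  shows "cross2 (polygon_edge n p k) (polygon_edge n p i) * norm (z - p i)
           \<le> 2 * norm (polygon_edge n p k) * edge_cross n p i z"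
proof -
  define e f v where "e = polygon_edge n p i" and "f = polygon_edge n p k" and "v = z - p i"
  have fe: "0 < cross2 f e" using ccw_convex_polygon_turn_left[OF poly k(1)] k(2) by (simp add: e_def f_def)
  have i: "i < n" using k by auto
  have "cross2 f v = edge_cross n p k z"
    using k by (simp add: edge_cross_def f_def v_def polygon_edge_def cross2_def algebra_simps)
  then have "\<bar>cross2 f e\<bar> * norm v \<le> 2 * norm f * cross2 e v"
    using norm_le_cross2_in_cone[of f e v] fe behind edge_cross_convex_hull_nonneg[OF poly _ z] k(1) i
    by (simp add: mult_nonneg_nonpos edge_cross_def e_def v_def)
  then show ?thesis using fe by (simp add: e_def f_def v_def edge_cross_def)
qed

lemma dist_end_vertex_le_edge_cross:
  assumes poly: "ccw_convex_polygon n p" and i: "i < n"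
    and z: "z \<in> convex hull (p ` {..<n})" and ahead: "0 \<le> (z - p (Suc i mod n)) \<bullet> polygon_edge n p i"
  shows "cross2 (polygon_edge n p i) (polygon_edge n p (Suc i mod n)) * norm (z - p (Suc i mod n))
           \<le> 2 * norm (polygon_edge n p (Suc i mod n)) * edge_cross n p i z"
proof -
  define i' where "i' = Suc i mod n"
  define e g v where "e = polygon_edge n p i" and "g = polygon_edge n p i'" and "v = z - p i'"
  have eg: "0 < cross2 e g" using ccw_convex_polygon_turn_left[OF poly i] by (simp add: e_def g_def i'_def)
  have ev: "cross2 e v = edge_cross n p i z"
    by (simp add: edge_cross_def e_def v_def i'_def polygon_edge_def cross2_def algebra_simps)
  have "\<bar>cross2 g e\<bar> * norm v \<le> 2 * norm g * cross2 e v"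
  proof (rule norm_le_cross2_in_cone)
    show "cross2 g e \<noteq> 0" "cross2 g e * (v \<bullet> e) \<le> 0"
      using eg ahead by (simp_all add: cross2_commute[of g] mult_nonpos_nonneg e_def v_def i'_def)
    show "0 \<le> cross2 g v"
      using edge_cross_convex_hull_nonneg[OF poly _ z, of i'] i by (simp add: edge_cross_def g_def v_def i'_def)
    show "0 \<le> cross2 e v" using edge_cross_convex_hull_nonneg[OF poly i z] ev by simp
  qed
  moreover have "\<bar>cross2 g e\<bar> = cross2 e g" using eg cross2_commute[of g e] by simp
  ultimately show ?thesis using ev by (simp add: e_def g_def v_def i'_def)
qed

lemma edge_projection_dist:
  assumes "0 \<le> (z - p i) \<bullet> polygon_edge n p i"
    and "(z - p i) \<bullet> polygon_edge n p i \<le> polygon_edge n p i \<bullet> polygon_edge n p i"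
  shows "\<exists>w\<in>closed_segment (p i) (p (Suc i mod n)).
           norm (polygon_edge n p i) * norm (z - w) = \<bar>edge_cross n p i z\<bar>"
proof -
  define e where "e = polygon_edge n p i"
  define t where "t = ((z - p i) \<bullet> e) / (e \<bullet> e)"
  define w where "w = p i + t *\<^sub>R e"
  have "0 \<le> t" "t \<le> 1" using assms by (auto simp: t_def e_def divide_le_eq_1)
  then have "w \<in> closed_segment (p i) (p (Suc i mod n))"
    by (auto simp: in_segment w_def e_def polygon_edge_def algebra_simps intro!: exI[of _ t])
  moreover have "e \<bullet> (z - w) = 0"
    by (cases "e = 0") (simp_all add: w_def t_def inner_diff_right inner_add_right inner_commute)
  then have "norm e * norm (z - w) = \<bar>edge_cross n p i z\<bar>"
    using abs_cross2_orthogonal[of e "z - w"]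
    by (simp add: w_def edge_cross_def e_def cross2_diff_right cross2_add_right cross2_scaleR_right)
  ultimately show ?thesis by (auto simp: e_def)
qed

text \<open>Within the polygon the distance to an edge is comparable to the distance to its line,
  with a constant controlled by the angles at the two endpoints of the edge.\<close>
lemma convex_hull_near_edge_point:
  assumes poly: "ccw_convex_polygon n p" and k: "k < n" "Suc k mod n = i"
    and z: "z \<in> convex hull (p ` {..<n})"
  defines "e \<equiv> polygon_edge n p i" and "f \<equiv> polygon_edge n p k"
    and "g \<equiv> polygon_edge n p (Suc i mod n)"
  shows "\<exists>w\<in>closed_segment (p i) (p (Suc i mod n)).
           norm (z - w) \<le> (2 * norm f / cross2 f e + 2 * norm g / cross2 e g + 1 / norm e) * edge_cross n p i z"
proof -
  have i: "i < n" using k by auto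
  define i' where "i' = Suc i mod n"
  have fe: "0 < cross2 f e" using ccw_convex_polygon_turn_left[OF poly k(1)] k(2) by (simp add: e_def f_def)
  have eg: "0 < cross2 e g" using ccw_convex_polygon_turn_left[OF poly i] by (simp add: e_def g_def)
  have e0: "0 < norm e" using polygon_edge_nonzero[OF poly i] by (simp add: e_def)
  define \<kappa> where "\<kappa> = 2 * norm f / cross2 f e + 2 * norm g / cross2 e g + 1 / norm e"
  have "0 \<le> 2 * norm f / cross2 f e" "0 \<le> 2 * norm g / cross2 e g" "0 \<le> 1 / norm e"
    using fe eg by simp_all
  then have \<kappa>_ge: "2 * norm f / cross2 f e \<le> \<kappa>" "2 * norm g / cross2 e g \<le> \<kappa>" "1 / norm e \<le> \<kappa>"
    unfolding \<kappa>_def by linarith+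
  define c where "c = edge_cross n p i z"
  have c0: "0 \<le> c" using edge_cross_convex_hull_nonneg[OF poly i z] by (simp add: c_def)
  have bound: "norm (z - w) \<le> \<kappa> * c" if "norm (z - w) \<le> \<alpha> * c" "\<alpha> \<le> \<kappa>" for w \<alpha>
    using that mult_right_mono[OF that(2) c0] by linarith
  consider "(z - p i) \<bullet> e < 0" | "0 \<le> (z - p i) \<bullet> e" "(z - p i) \<bullet> e \<le> e \<bullet> e"
    | "e \<bullet> e < (z - p i) \<bullet> e" by linarith
  then have "\<exists>w\<in>closed_segment (p i) (p i'). norm (z - w) \<le> \<kappa> * c"
  proof cases
    case 1
    then have "norm (z - p i) \<le> (2 * norm f / cross2 f e) * c"
      using dist_start_vertex_le_edge_cross[OF poly k z] fe by (simp add: e_def f_def c_def field_simps)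
    from bound[OF this \<kappa>_ge(1)] show ?thesis by auto
  next
    case 2
    then obtain w where w: "w \<in> closed_segment (p i) (p i')" "norm e * norm (z - w) = c"
      using edge_projection_dist[of z p i n] c0 by (auto simp: e_def c_def i'_def)
    then have "norm (z - w) \<le> (1 / norm e) * c" using e0 by (simp add: field_simps)
    from bound[OF this \<kappa>_ge(3)] w(1) show ?thesis by auto
  next
    case 3
    then have "0 \<le> (z - p i') \<bullet> e" by (simp add: e_def i'_def polygon_edge_def inner_diff_left)
    then have "norm (z - p i') \<le> (2 * norm g / cross2 e g) * c"
      using dist_end_vertex_le_edge_cross[OF poly i z] eg by (simp add: e_def g_def i'_def c_def field_simps)
    from bound[OF this \<kappa>_ge(2)] show ?thesis by auto
  qed
  then show ?thesis by (simp add: c_def \<kappa>_def i'_def)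
qed

lemma convex_hull_near_edge:
  assumes poly: "ccw_convex_polygon n p" and i: "i < n"
  shows "\<exists>\<kappa>\<ge>0. \<forall>z\<in>convex hull (p ` {..<n}). \<exists>w\<in>closed_segment (p i) (p (Suc i mod n)).
           norm (z - w) \<le> \<kappa> * edge_cross n p i z"
proof -
  obtain k where k: "k < n" "Suc k mod n = i" using exists_prev_index[OF i] by blast
  define e f g where "e = polygon_edge n p i" and "f = polygon_edge n p k"
    and "g = polygon_edge n p (Suc i mod n)"
  have "0 < cross2 f e" using ccw_convex_polygon_turn_left[OF poly k(1)] k(2) by (simp add: e_def f_def)
  moreover have "0 < cross2 e g" using ccw_convex_polygon_turn_left[OF poly i] by (simp add: e_def g_def)
  ultimately have "0 \<le> 2 * norm f / cross2 f e + 2 * norm g / cross2 e g + 1 / norm e" by simp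
  then show ?thesis using convex_hull_near_edge_point[OF poly k] unfolding e_def f_def g_def by blast
qed

lemma frontier_polygon_interior_subset_edges:
  assumes poly: "ccw_convex_polygon n p" and y: "y \<in> frontier (polygon_interior n p)"
  obtains i where "i < n" "y \<in> closed_segment (p i) (p (Suc i mod n))"
proof -
  obtain i where i: "i < n" "edge_cross n p i y = 0"
    using frontier_polygon_interior_on_edge_line[OF poly y] by blast
  obtain \<kappa> where "\<forall>z\<in>convex hull (p ` {..<n}). \<exists>w\<in>closed_segment (p i) (p (Suc i mod n)).
      norm (z - w) \<le> \<kappa> * edge_cross n p i z"
    using convex_hull_near_edge[OF poly i(1)] by blast
  then have "\<exists>w\<in>closed_segment (p i) (p (Suc i mod n)). norm (y - w) \<le> 0"
    using frontier_polygon_interior_on_edge_line(1)[OF poly y] i(2) by force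
  then show ?thesis using that i(1) by auto
qed

section \<open>Affine minorants of the boundary data\<close>

definition edge_interp :: "nat \<Rightarrow> (nat \<Rightarrow> real^2) \<Rightarrow> (nat \<Rightarrow> real) \<Rightarrow> nat \<Rightarrow> real^2 \<Rightarrow> real" where
  "edge_interp n p b i z = b i + (b (Suc i mod n) - b i) *
     ((polygon_edge n p i \<bullet> (z - p i)) / (polygon_edge n p i \<bullet> polygon_edge n p i))"

lemma edge_interp_on_edge:
  assumes poly: "ccw_convex_polygon n p" and bdry: "extends_boundary_data n p b f" and i: "i < n"
    and w: "w \<in> closed_segment (p i) (p (Suc i mod n))"
  shows "f w = edge_interp n p b i w"
proof -
  define e where "e = polygon_edge n p i"
  obtain s where s: "0 \<le> s" "s \<le> 1" "w = p i + s *\<^sub>R e"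
    using w by (auto simp: in_segment e_def polygon_edge_def algebra_simps)
  have "e \<bullet> e \<noteq> 0" using polygon_edge_nonzero[OF poly i] by (simp add: e_def)
  then have "edge_interp n p b i w = b i + (b (Suc i mod n) - b i) * s"
    by (simp add: edge_interp_def e_def[symmetric] s(3))
  moreover have "f w = (1 - s) * b i + s * b (Suc i mod n)"
    using bdry i s unfolding extends_boundary_data_def e_def polygon_edge_def by auto
  ultimately show ?thesis by (simp add: algebra_simps)
qed

lemma edge_interp_diff_le:
  "\<bar>edge_interp n p b i z - edge_interp n p b i w\<bar>
     \<le> \<bar>b (Suc i mod n) - b i\<bar> / norm (polygon_edge n p i) * norm (z - w)"
proof -
  define e where "e = polygon_edge n p i"
  have "edge_interp n p b i z - edge_interp n p b i w
      = (b (Suc i mod n) - b i) * ((e \<bullet> (z - w)) / (norm e)\<^sup>2)"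
    by (simp add: edge_interp_def e_def power2_norm_eq_inner inner_diff_right diff_divide_distrib
        algebra_simps)
  also have "\<bar>\<dots>\<bar> \<le> \<bar>b (Suc i mod n) - b i\<bar> * (norm e * norm (z - w) / (norm e)\<^sup>2)"
    by (simp add: abs_mult divide_right_mono Cauchy_Schwarz_ineq2 mult_left_mono)
  also have "\<dots> = \<bar>b (Suc i mod n) - b i\<bar> / norm e * norm (z - w)"
    by (cases "e = 0") (simp_all add: power2_eq_square)
  finally show ?thesis by (simp add: e_def)
qed

lemma edge_interp_minus_edge_cross_affine:
  "\<exists>g c. \<forall>z. edge_interp n p b i z - K * edge_cross n p i z = c + g \<bullet> z"
proof -
  define e where "e = polygon_edge n p i"
  define s where "s = (b (Suc i mod n) - b i) / (e \<bullet> e)"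
  have "edge_interp n p b i z = b i + s * (e \<bullet> z - e \<bullet> p i)" for z
    by (simp add: edge_interp_def e_def s_def inner_diff_right)
  then have "edge_interp n p b i z - K * edge_cross n p i z
      = (b i - s * (e \<bullet> p i) + K * (rot90 e \<bullet> p i)) + (s *\<^sub>R e - K *\<^sub>R rot90 e) \<bullet> z" for z
    by (simp add: edge_cross_affine e_def[symmetric] inner_diff_left algebra_simps)
  then show ?thesis by blast
qed

lemma edge_segment_subset_convex_hull:
  "i < n \<Longrightarrow> closed_segment (p i) (p (Suc i mod n)) \<subseteq> convex hull (p ` {..<n})"
  by (intro closed_segment_subset) (simp_all add: hull_inc)

lemma abs_diff_edge_interp_le:
  assumes poly: "ccw_convex_polygon n p" and bdry: "extends_boundary_data n p b f"
    and lip: "L-lipschitz_on (convex hull (p ` {..<n})) f" and i: "i < n"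
    and y: "y \<in> closed_segment (p i) (p (Suc i mod n))" and u: "u \<in> convex hull (p ` {..<n})"
  shows "\<bar>f u - edge_interp n p b i u\<bar>
           \<le> (L + \<bar>b (Suc i mod n) - b i\<bar> / norm (polygon_edge n p i)) * dist u y"
proof -
  have "y \<in> convex hull (p ` {..<n})" using y edge_segment_subset_convex_hull[OF i] by blast
  then have "\<bar>f u - f y\<bar> \<le> L * dist u y" using lipschitz_onD[OF lip u] by (simp add: dist_real_def)
  moreover have "\<bar>edge_interp n p b i u - f y\<bar>
      \<le> \<bar>b (Suc i mod n) - b i\<bar> / norm (polygon_edge n p i) * dist u y"
    using edge_interp_diff_le[of n p b i u y] edge_interp_on_edge[OF poly bdry i y] by (simp add: dist_norm)
  ultimately show ?thesis by (simp add: distrib_right)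
qed

lemma edge_cross_le_dist:
  assumes "y \<in> closed_segment (p i) (p (Suc i mod n))"
  shows "edge_cross n p i u \<le> norm (polygon_edge n p i) * dist u y"
proof -
  obtain s where "y = p i + s *\<^sub>R polygon_edge n p i"
    using assms by (auto simp: in_segment polygon_edge_def algebra_simps)
  then have "edge_cross n p i u = cross2 (polygon_edge n p i) (u - y)"
    by (simp add: edge_cross_def cross2_diff_right cross2_add_right cross2_scaleR_right)
  then show ?thesis using abs_cross2_le[of "polygon_edge n p i" "u - y"] by (simp add: dist_norm)
qed

lemma edge_minorant:
  assumes poly: "ccw_convex_polygon n p" and bdry: "extends_boundary_data n p b f"
    and lip: "L-lipschitz_on (convex hull (p ` {..<n})) f" and i: "i < n"
  shows "\<exists>K\<ge>0. \<forall>z\<in>convex hull (p ` {..<n}). edge_interp n p b i z - K * edge_cross n p i z \<le> f z"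
proof -
  obtain \<kappa> where \<kappa>: "0 \<le> \<kappa>" and near: "\<forall>z\<in>convex hull (p ` {..<n}).
      \<exists>w\<in>closed_segment (p i) (p (Suc i mod n)). norm (z - w) \<le> \<kappa> * edge_cross n p i z"
    using convex_hull_near_edge[OF poly i] by blast
  define \<mu> where "\<mu> = L + \<bar>b (Suc i mod n) - b i\<bar> / norm (polygon_edge n p i)"
  have \<mu>0: "0 \<le> \<mu>" using lip by (simp add: \<mu>_def lipschitz_on_def)
  have "edge_interp n p b i z - (\<mu> * \<kappa>) * edge_cross n p i z \<le> f z"
    if z: "z \<in> convex hull (p ` {..<n})" for z
  proof -
    obtain w where w: "w \<in> closed_segment (p i) (p (Suc i mod n))"
      and zw: "dist z w \<le> \<kappa> * edge_cross n p i z"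
      using near z by (auto simp: dist_norm)
    have "edge_interp n p b i z - f z \<le> \<mu> * dist z w"
      using abs_diff_edge_interp_le[OF poly bdry lip i w z] by (simp add: \<mu>_def)
    also have "\<dots> \<le> (\<mu> * \<kappa>) * edge_cross n p i z"
      using mult_left_mono[OF zw \<mu>0] by simp
    finally show ?thesis by simp
  qed
  then show ?thesis using \<mu>0 \<kappa> by (metis mult_nonneg_nonneg)
qed

definition boundary_affine_minorants :: "real \<Rightarrow> (real^2) set \<Rightarrow> (real^2 \<Rightarrow> real) \<Rightarrow> bool" where
  "boundary_affine_minorants K U f \<longleftrightarrow>
     (\<forall>u\<in>U. \<forall>y\<in>frontier U. \<exists>g c. (\<forall>z\<in>closure U. c + g \<bullet> z \<le> f z) \<and> f u - K * dist u y \<le> c + g \<bullet> u)"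

lemma polygon_boundary_affine_minorants:
  assumes poly: "ccw_convex_polygon n p" and bdry: "extends_boundary_data n p b f"
    and lip: "L-lipschitz_on (closure (polygon_interior n p)) f"
  shows "\<exists>K\<ge>0. boundary_affine_minorants K (polygon_interior n p) f"
proof -
  define U H where "U = polygon_interior n p" and "H = convex hull (p ` {..<n})"
  have clU: "closure U = H" unfolding U_def H_def by (rule closure_polygon_interior[OF poly])
  have lipH: "L-lipschitz_on H f" using lip by (simp add: U_def clU[symmetric])
  obtain Ke where Ke: "\<And>i. i < n \<Longrightarrow> 0 \<le> Ke i \<and>
      (\<forall>z\<in>H. edge_interp n p b i z - Ke i * edge_cross n p i z \<le> f z)"
    using edge_minorant[OF poly bdry lipH[unfolded H_def]] unfolding H_def by metis
  define Ki where "Ki i = L + \<bar>b (Suc i mod n) - b i\<bar> / norm (polygon_edge n p i)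
      + Ke i * norm (polygon_edge n p i)" for i
  define K where "K = (\<Sum>i<n. Ki i)"
  have Ki0: "0 \<le> Ki i" if "i < n" for i
    using Ke[OF that] lip by (simp add: Ki_def lipschitz_on_def)
  have "\<exists>g c. (\<forall>z\<in>closure U. c + g \<bullet> z \<le> f z) \<and> f u - K * dist u y \<le> c + g \<bullet> u"
    if u: "u \<in> U" and y: "y \<in> frontier U" for u y
  proof -
    obtain i where i: "i < n" and yi: "y \<in> closed_segment (p i) (p (Suc i mod n))"
      using frontier_polygon_interior_subset_edges[OF poly y[unfolded U_def]] by blast
    obtain g c where gc: "\<And>z. edge_interp n p b i z - Ke i * edge_cross n p i z = c + g \<bullet> z"
      using edge_interp_minus_edge_cross_affine by blast
    have "u \<in> H" using u closure_subset clU by blast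
    then have "\<bar>f u - edge_interp n p b i u\<bar>
        \<le> (L + \<bar>b (Suc i mod n) - b i\<bar> / norm (polygon_edge n p i)) * dist u y"
      using abs_diff_edge_interp_le[OF poly bdry lipH[unfolded H_def] i yi] by (simp add: H_def)
    moreover have "Ke i * edge_cross n p i u \<le> Ke i * norm (polygon_edge n p i) * dist u y"
      using edge_cross_le_dist[OF yi, of u] Ke[OF i] by (simp add: mult_left_mono mult.assoc)
    ultimately have "f u - Ki i * dist u y \<le> c + g \<bullet> u"
      using gc[of u] by (simp add: Ki_def algebra_simps)
    moreover have "Ki i \<le> K" unfolding K_def using i Ki0 by (intro member_le_sum) auto
    then have "Ki i * dist u y \<le> K * dist u y" by (simp add: mult_right_mono)
    ultimately have "f u - K * dist u y \<le> c + g \<bullet> u" by linarith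
    moreover have "\<forall>z\<in>closure U. c + g \<bullet> z \<le> f z" using Ke[OF i] clU gc by metis
    ultimately show ?thesis by blast
  qed
  moreover have "0 \<le> K" unfolding K_def using Ki0 by (intro sum_nonneg) auto
  ultimately show ?thesis unfolding boundary_affine_minorants_def U_def by blast
qed

section \<open>Alexandrov's estimate\<close>

text \<open>The minimum of \<open>\<phi> - (g + q) \<bullet> _\<close> over the closure cannot lie on the frontier, and at an
  interior minimiser \<open>g + q\<close> is a subgradient.\<close>
lemma subdiff_image_contains_slope:
  fixes \<phi> :: "real^2 \<Rightarrow> real"
  assumes Om: "open Om" "bounded Om" and u: "u \<in> Om" and cont: "continuous_on (closure Om) \<phi>"
    and bd: "\<forall>z\<in>frontier Om. c + g \<bullet> z \<le> \<phi> z"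
    and q: "\<forall>z\<in>closure Om. q \<bullet> (z - u) < c + g \<bullet> u - \<phi> u"
  shows "g + q \<in> (\<Union>x\<in>Om. subdiff \<phi> Om x)"
proof -
  have "continuous_on (closure Om) (\<lambda>z. \<phi> z - (g + q) \<bullet> z)"
    by (intro continuous_intros cont)
  moreover have "compact (closure Om)" "closure Om \<noteq> {}"
    using Om u by (auto simp: compact_closure)
  ultimately obtain x where x: "x \<in> closure Om"
    and xmin: "\<And>z. z \<in> closure Om \<Longrightarrow> \<phi> x - (g + q) \<bullet> x \<le> \<phi> z - (g + q) \<bullet> z"
    using continuous_attains_inf[of "closure Om" "\<lambda>z. \<phi> z - (g + q) \<bullet> z"] by auto
  have "x \<notin> frontier Om"
  proof
    assume "x \<in> frontier Om"
    then have "c + g \<bullet> x \<le> \<phi> x" using bd by blast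
    moreover have "q \<bullet> (x - u) < c + g \<bullet> u - \<phi> u" using q x by blast
    moreover have "\<phi> x - (g + q) \<bullet> x \<le> \<phi> u - (g + q) \<bullet> u"
      using xmin u closure_subset by blast
    ultimately show False by (simp add: inner_add_left inner_diff_right)
  qed
  then have "x \<in> Om" using x Om(1) by (simp add: frontier_def interior_open)
  moreover have "\<phi> x + (g + q) \<bullet> (z - x) \<le> \<phi> z" if "z \<in> Om" for z
    using xmin[of z] that closure_subset[of Om] by (auto simp: inner_diff_right)
  then have "g + q \<in> subdiff \<phi> Om x" by (simp add: subdiff_def)
  ultimately show ?thesis by blast
qed

lemma orthonormal_frame_image:
  fixes e :: "real^2" and S :: "(real^2) set"
  assumes e: "norm e = 1" and S: "S \<in> lmeasurable"
  shows "(\<lambda>y. y$1 *\<^sub>R e + y$2 *\<^sub>R rot90 e) ` S \<in> lmeasurable"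
    and "measure lebesgue ((\<lambda>y. y$1 *\<^sub>R e + y$2 *\<^sub>R rot90 e) ` S) = measure lebesgue S"
proof -
  define f where "f y = y$1 *\<^sub>R e + y$2 *\<^sub>R rot90 e" for y :: "real^2"
  have lin: "linear f" unfolding f_def by (intro linearI) (auto simp: algebra_simps)
  have "det (matrix f) = e$1 * e$1 + e$2 * e$2"
    by (simp add: f_def det_2 matrix_def axis_def rot90_def)
  also have "\<dots> = 1" using e by (simp add: norm_eq_sqrt_inner inner_real2 real_sqrt_eq_1_iff)
  finally have "det (matrix f) = 1" .
  then show "f ` S \<in> lmeasurable" "measure lebesgue (f ` S) = measure lebesgue S"
    using measurable_linear_image[OF lin S] measure_linear_image[OF lin S] by simp_all
qed

definition slope_box :: "real^2 \<Rightarrow> real^2 \<Rightarrow> real \<Rightarrow> real \<Rightarrow> (real^2) set" where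
  "slope_box g e a b =
     (\<lambda>y. g + (y$1 *\<^sub>R e + y$2 *\<^sub>R rot90 e)) ` cbox (vector [0, - b]) (vector [a, b] :: real^2)"

lemma slope_box_measure:
  assumes e: "norm e = 1" and "0 \<le> a" "0 \<le> b"
  shows "slope_box g e a b \<in> lmeasurable" "measure lebesgue (slope_box g e a b) = 2 * a * b"
proof -
  define B where "B = cbox (vector [0, - b]) (vector [a, b] :: real^2)"
  define f where "f = (\<lambda>y::real^2. y$1 *\<^sub>R e + y$2 *\<^sub>R rot90 e)"
  have box: "slope_box g e a b = (+) g ` f ` B" by (simp add: slope_box_def B_def f_def image_image)
  have "B \<in> lmeasurable" by (simp add: B_def)
  then have "f ` B \<in> lmeasurable" "measure lebesgue (f ` B) = measure lebesgue B"
    unfolding f_def by (rule orthonormal_frame_image[OF e])+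
  moreover have "vector [0, - b] \<in> B" using assms by (auto simp: B_def mem_box_cart forall_2)
  then have "B \<noteq> {}" by blast
  then have "measure lebesgue B = 2 * a * b"
    unfolding B_def by (subst measure_completion) (simp_all add: content_cbox_cart UNIV_2)
  ultimately show "slope_box g e a b \<in> lmeasurable" "measure lebesgue (slope_box g e a b) = 2 * a * b"
    by (simp_all add: box measurable_translation measure_translation)
qed

text \<open>If \<open>\<phi>\<close> lies below the affine function \<open>c + g \<bullet> _\<close> by \<open>h\<close> at \<open>u\<close>, then each added slope
  \<open>q\<close> of the box raises \<open>q \<bullet> (_ - u)\<close> by at most \<open>h/4 + h/4\<close> on \<open>\<Omega>\<close>, which is too little to lift the
  minimum of \<open>\<phi> - (g + q) \<bullet> _\<close> to the frontier.\<close>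
lemma slope_box_subset_subdiff_image:
  fixes \<phi> :: "real^2 \<Rightarrow> real"
  assumes Om: "open Om" "bounded Om" and u: "u \<in> Om" and cont: "continuous_on (closure Om) \<phi>"
    and bd: "\<forall>z\<in>frontier Om. c + g \<bullet> z \<le> \<phi> z"
    and e: "norm e = 1" and width: "\<forall>z\<in>closure Om. e \<bullet> (z - u) \<le> d" and d: "0 < d"
    and diam: "\<forall>z\<in>closure Om. norm (z - u) \<le> D" and D: "0 < D"
    and h: "0 < h" "h \<le> c + g \<bullet> u - \<phi> u"
  shows "slope_box g e (h / (4 * d)) (h / (4 * D)) \<subseteq> (\<Union>x\<in>Om. subdiff \<phi> Om x)"
proof (clarsimp simp only: slope_box_def image_iff)
  fix y :: "real^2" assume y: "y \<in> cbox (vector [0, - (h / (4 * D))]) (vector [h / (4 * d), h / (4 * D)])"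
  define q where "q = y$1 *\<^sub>R e + y$2 *\<^sub>R rot90 e"
  have y1: "0 \<le> y$1" "y$1 * d \<le> h / 4" and y2: "\<bar>y$2\<bar> * D \<le> h / 4"
    using y d D by (auto simp: mem_box_cart forall_2 field_simps)
  have "q \<bullet> (z - u) < c + g \<bullet> u - \<phi> u" if z: "z \<in> closure Om" for z
  proof -
    have "y$1 * (e \<bullet> (z - u)) \<le> y$1 * d"
      using width z y1(1) by (simp add: mult_left_mono)
    moreover have "\<bar>rot90 e \<bullet> (z - u)\<bar> \<le> norm (z - u)"
      using Cauchy_Schwarz_ineq2[of "rot90 e" "z - u"] e by simp
    then have "\<bar>rot90 e \<bullet> (z - u)\<bar> \<le> D" using diam z by (meson order_trans)
    then have "\<bar>y$2\<bar> * \<bar>rot90 e \<bullet> (z - u)\<bar> \<le> \<bar>y$2\<bar> * D"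
      by (rule mult_left_mono) simp
    then have "y$2 * (rot90 e \<bullet> (z - u)) \<le> \<bar>y$2\<bar> * D"
      by (metis abs_ge_self abs_mult order_trans)
    moreover have "q \<bullet> (z - u) = y$1 * (e \<bullet> (z - u)) + y$2 * (rot90 e \<bullet> (z - u))"
      by (simp add: q_def inner_add_left)
    ultimately show ?thesis using y1 y2 h by linarith
  qed
  then show "g + q \<in> (\<Union>x\<in>Om. subdiff \<phi> Om x)"
    using subdiff_image_contains_slope[OF Om u cont bd] by simp
qed

text \<open>For \<open>h > \<surd>(8DMd)\<close> the slope box would have area \<open>h\<^sup>2/(8dD) > M\<close>.\<close>
lemma alexandrov_estimate:
  fixes \<phi> :: "real^2 \<Rightarrow> real"
  assumes Om: "open Om" "bounded Om" and u: "u \<in> Om" and cont: "continuous_on (closure Om) \<phi>"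
    and bd: "\<forall>z\<in>frontier Om. c + g \<bullet> z \<le> \<phi> z"
    and e: "norm e = 1" and width: "\<forall>z\<in>closure Om. e \<bullet> (z - u) \<le> d" and d: "0 < d"
    and diam: "\<forall>z\<in>closure Om. norm (z - u) \<le> D" and D: "0 < D"
    and meas: "(\<Union>x\<in>Om. subdiff \<phi> Om x) \<in> sets lebesgue"
    and M: "0 \<le> M" "emeasure lebesgue (\<Union>x\<in>Om. subdiff \<phi> Om x) \<le> ennreal M"
  shows "c + g \<bullet> u - sqrt (8 * D * M * d) \<le> \<phi> u"
proof (rule ccontr)
  define h where "h = c + g \<bullet> u - \<phi> u"
  assume "\<not> ?thesis"
  then have h_gt: "sqrt (8 * D * M * d) < h" by (simp add: h_def)
  then have h0: "0 < h" using D d M(1) by (smt (verit) mult_nonneg_nonneg real_sqrt_ge_zero)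
  let ?Q = "slope_box g e (h / (4 * d)) (h / (4 * D))"
  have "?Q \<subseteq> (\<Union>x\<in>Om. subdiff \<phi> Om x)"
    using slope_box_subset_subdiff_image[OF Om u cont bd e width d diam D h0] by (simp add: h_def)
  then have "emeasure lebesgue ?Q \<le> ennreal M"
    using emeasure_mono[OF _ meas] M(2) order_trans by blast
  moreover have "?Q \<in> lmeasurable" "measure lebesgue ?Q = 2 * (h / (4 * d)) * (h / (4 * D))"
    using slope_box_measure[OF e] h0 d D by simp_all
  ultimately have "2 * (h / (4 * d)) * (h / (4 * D)) \<le> M"
    using M(1) by (simp add: emeasure_eq_measure2)
  then have "h * h \<le> 8 * D * M * d" using d D by (simp add: field_simps)
  then have "h \<le> sqrt (8 * D * M * d)" by (simp add: real_le_rsqrt power2_eq_square)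
  then show False using h_gt by linarith
qed

lemma convex_width_le_dist:
  fixes Om :: "'a::euclidean_space set"
  assumes "convex Om" "u \<in> Om" "w \<notin> Om"
  shows "\<exists>e. norm e = 1 \<and> (\<forall>z\<in>closure Om. e \<bullet> (z - u) \<le> dist u w)"
proof -
  obtain a \<beta> where a: "a \<noteq> 0" "\<forall>x\<in>Om. a \<bullet> x \<le> \<beta>" "\<beta> \<le> a \<bullet> w"
    using separating_hyperplane_sets[of Om "{w}"] assms by auto
  define e where "e = a /\<^sub>R norm a"
  have "e \<bullet> (z - u) \<le> dist u w" if z: "z \<in> closure Om" for z
  proof -
    have "closure Om \<subseteq> {x. a \<bullet> x \<le> \<beta>}"
      using a(2) by (intro closure_minimal) (auto simp: closed_halfspace_le)
    then have "a \<bullet> z \<le> a \<bullet> w" using z a(3) by auto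
    then have "e \<bullet> (z - u) \<le> e \<bullet> (w - u)"
      using a(1) by (simp add: e_def inner_diff_right divide_right_mono)
    also have "\<dots> \<le> norm e * norm (w - u)" by (rule norm_cauchy_schwarz)
    finally show ?thesis using a(1) by (simp add: e_def dist_norm norm_minus_commute)
  qed
  moreover have "norm e = 1" using a(1) by (simp add: e_def)
  ultimately show ?thesis by blast
qed

text \<open>The outer measure of a non-measurable set is \<open>0\<close> by convention, so a strictly positive
  density forces the subgradient image to be measurable.\<close>
lemma alexandrov_MA_subdiff_image:
  fixes \<phi> V :: "real^2 \<Rightarrow> real"
  assumes MA: "alexandrov_MA \<phi> V Om" and Om: "open Om" "Om \<noteq> {}"
    and V: "V \<in> borel_measurable borel" "\<forall>x\<in>Om. 0 < V x"
  shows "(\<Union>x\<in>Om. subdiff \<phi> Om x) \<in> sets lebesgue"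
    and "emeasure lebesgue (\<Union>x\<in>Om. subdiff \<phi> Om x) = (\<integral>\<^sup>+x\<in>Om. ennreal (V x) \<partial>lebesgue)"
proof -
  show eq: "emeasure lebesgue (\<Union>x\<in>Om. subdiff \<phi> Om x) = (\<integral>\<^sup>+x\<in>Om. ennreal (V x) \<partial>lebesgue)"
    using MA Om(1) by (simp add: alexandrov_MA_def borel_open)
  show "(\<Union>x\<in>Om. subdiff \<phi> Om x) \<in> sets lebesgue"
  proof (rule ccontr)
    have [measurable]: "Om \<in> sets borel" using Om(1) by simp
    have "(\<lambda>x. ennreal (V x) * indicator Om x) \<in> borel_measurable borel"
      using V(1) by measurable
    then have meas: "(\<lambda>x. ennreal (V x) * indicator Om x) \<in> borel_measurable lebesgue"
      by (metis measurable_completion measurable_lborel2)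
    assume "(\<Union>x\<in>Om. subdiff \<phi> Om x) \<notin> sets lebesgue"
    then have "(\<integral>\<^sup>+x. ennreal (V x) * indicator Om x \<partial>lebesgue) = 0"
      using eq by (simp add: emeasure_notin_sets)
    then have "AE x in lebesgue. ennreal (V x) * indicator Om x = 0"
      using meas by (simp add: nn_integral_0_iff_AE)
    then have "AE x \<in> Om in lebesgue. x \<in> {}"
      by eventually_elim (use V(2) in \<open>auto simp: indicator_def\<close>)
    then show False using mem_closed_if_AE_lebesgue_open[OF Om(1) closed_empty] Om(2) by blast
  qed
qed

lemma mult_le_mult_sqrt:
  fixes K d D :: real
  assumes "0 \<le> K" "0 \<le> d" "d \<le> D"
  shows "K * d \<le> K * sqrt D * sqrt d"
proof -
  have "sqrt d * sqrt d \<le> sqrt D * sqrt d"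
    using assms by (intro mult_right_mono) auto
  then show ?thesis using assms by (simp add: mult_left_mono mult.assoc)
qed

lemma nearest_frontier_point_width:
  fixes U Om :: "'a::euclidean_space set"
  assumes U: "open U" "bounded U" and Om: "open Om" "convex Om" "Om \<subseteq> U" and u: "u \<in> Om"
  obtains y e where "y \<in> frontier U" "infdist u (frontier U) = dist u y" "0 < dist u y"
    "norm e = 1" "\<forall>z\<in>closure Om. e \<bullet> (z - u) \<le> dist u y"
proof -
  have uU: "u \<in> U" using Om(3) u by blast
  then have "frontier U \<noteq> {}" using U(2) not_bounded_UNIV by (auto simp: frontier_eq_empty)
  then obtain y where y: "y \<in> frontier U" "infdist u (frontier U) = dist u y"
    using infdist_attains_inf[OF frontier_closed] by blast
  have "y \<notin> U" using y(1) U(1) by (simp add: frontier_def interior_open)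
  then have "0 < dist u y" using uU by auto
  obtain w where w: "w \<in> closed_segment u y" "w \<in> frontier Om"
  proof -
    have "closed_segment u y \<inter> frontier Om \<noteq> {}"
      using u \<open>y \<notin> U\<close> Om(3) by (intro connected_Int_frontier) auto
    then show ?thesis using that by blast
  qed
  have "w \<notin> Om" using w(2) Om(1) by (simp add: frontier_def interior_open)
  then obtain e where e: "norm e = 1" "\<forall>z\<in>closure Om. e \<bullet> (z - u) \<le> dist u w"
    using convex_width_le_dist[OF Om(2) u] by blast
  moreover have "dist u w \<le> dist u y"
    using dist_in_closed_segment[OF w(1)] by (simp add: dist_commute)
  ultimately show ?thesis using that y \<open>0 < dist u y\<close> by force
qed

lemma lower_bound_from_boundary_minorants:
  fixes \<phi> f :: "real^2 \<Rightarrow> real"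
  assumes U: "open U" "bounded U" and D: "\<forall>x\<in>closure U. \<forall>y\<in>closure U. dist x y \<le> D"
    and K: "0 \<le> K" "boundary_affine_minorants K U f"
    and Om: "open Om" "convex Om" "Om \<subseteq> U" and u: "u \<in> Om"
    and cont: "continuous_on (closure Om) \<phi>" and bc: "\<forall>x\<in>frontier Om. f x \<le> \<phi> x"
    and meas: "(\<Union>x\<in>Om. subdiff \<phi> Om x) \<in> sets lebesgue"
    and M: "0 \<le> M" "emeasure lebesgue (\<Union>x\<in>Om. subdiff \<phi> Om x) \<le> ennreal M"
  shows "f u - (K * sqrt D + sqrt (8 * D * M)) * sqrt (infdist u (frontier U)) \<le> \<phi> u"
proof -
  obtain y e where y: "y \<in> frontier U" "infdist u (frontier U) = dist u y"
    and d0: "0 < dist u y" and e: "norm e = 1" "\<forall>z\<in>closure Om. e \<bullet> (z - u) \<le> dist u y"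
    using nearest_frontier_point_width[OF U Om u] by blast
  have clU: "u \<in> closure U" "y \<in> closure U" "closure Om \<subseteq> closure U"
    using u Om(3) y(1) closure_subset closure_mono[OF Om(3)] by (auto simp: frontier_def)
  then have dD: "dist u y \<le> D" and diam: "\<forall>z\<in>closure Om. norm (z - u) \<le> D"
    using D by (force simp: dist_norm)+
  obtain g c where gc: "\<forall>z\<in>closure U. c + g \<bullet> z \<le> f z" "f u - K * dist u y \<le> c + g \<bullet> u"
    using K(2) u Om(3) y(1) unfolding boundary_affine_minorants_def by blast
  have "\<forall>z\<in>frontier Om. c + g \<bullet> z \<le> \<phi> z"
    using gc(1) bc clU(3) by (force simp: frontier_def)
  then have "c + g \<bullet> u - sqrt (8 * D * M * dist u y) \<le> \<phi> u"
    using alexandrov_estimate[OF Om(1) bounded_subset[OF U(2) Om(3)] u cont _ e d0 diam _ meas M]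
      d0 dD by simp
  moreover have "K * dist u y \<le> K * sqrt D * sqrt (dist u y)"
    using mult_le_mult_sqrt K(1) d0 dD by simp
  moreover have "sqrt (8 * D * M * dist u y) = sqrt (8 * D * M) * sqrt (dist u y)"
    by (simp add: real_sqrt_mult)
  ultimately show ?thesis using gc(2) y(2) by (simp add: algebra_simps)
qed

section \<open>Integrability of the potential\<close>

lemma potential_borel_measurable: "potential n p A \<in> borel_measurable borel"
  unfolding potential_def by measurable

lemma potential_pos:
  assumes poly: "ccw_convex_polygon n p" and A: "0 \<le> A"
  shows "0 < potential n p A x"
proof -
  have n3: "3 \<le> n" by (rule ccw_convex_polygon_ge_3[OF poly])
  then have "p 1 \<noteq> p 0" using polygon_edge_nonzero[OF poly, of 0] by (simp add: polygon_edge_def)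
  then obtain j where j: "j \<in> {0, 1}" "x \<noteq> p j" by blast
  have "0 < (\<Sum>i<n. 1 / (2 * norm (x - p i)))"
    by (rule sum_pos2[of _ j]) (use j n3 in auto)
  then show ?thesis using A by (simp add: potential_def)
qed

lemma inverse_norm_le_dyadic_sum:
  fixes c :: "real^2"
  assumes R: "0 < R"
  shows "ennreal (1 / norm (x - c)) * indicator (cball c R) x
           \<le> (\<Sum>k. ennreal (2 ^ (k + 1) / R) * indicator (cball c (R / 2 ^ k)) x)"
proof (cases "x \<in> cball c R \<and> x \<noteq> c")
  case True
  define F where "F k = ennreal (2 ^ (k + 1) / R) * indicator (cball c (R / 2 ^ k)) x" for k :: nat
  define r where "r = norm (x - c)"
  have r: "0 < r" "r \<le> R" using True by (auto simp: r_def dist_norm norm_minus_commute)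
  define m where "m = nat \<lfloor>log 2 (R / r)\<rfloor>"
  have "0 \<le> log 2 (R / r)" using r by simp
  then have "real m \<le> log 2 (R / r)" "log 2 (R / r) < real (m + 1)"
    unfolding m_def by linarith+
  then have "2 powr real m \<le> R / r" "R / r < 2 powr real (m + 1)"
    using r powr_mono[of "real m" "log 2 (R / r)" 2] powr_less_mono[of "log 2 (R / r)" "real (m + 1)" 2]
    by simp_all
  then have "2 ^ m \<le> R / r" "R / r < 2 ^ (m + 1)"
    by (metis powr_realpow zero_less_numeral)+
  then have "x \<in> cball c (R / 2 ^ m)" "1 / r \<le> 2 ^ (m + 1) / R"
    using r R by (simp_all add: dist_norm norm_minus_commute r_def field_simps)
  then have "ennreal (1 / norm (x - c)) * indicator (cball c R) x \<le> F m"
    using True by (simp add: F_def r_def ennreal_leI)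
  also have "F m \<le> (\<Sum>k. F k)"
    using sum_le_suminf[of F "{m}"] by (simp add: summableI)
  finally show ?thesis by (simp add: F_def)
qed (auto simp: indicator_def)

text \<open>In the plane the \<open>k\<close>-th dyadic term has integral \<open>2\<pi>R / 2\<^sup>k\<close>.\<close>
lemma nn_integral_inverse_norm_cball_finite:
  fixes c :: "real^2"
  assumes R: "0 < R"
  shows "(\<integral>\<^sup>+x. ennreal (1 / norm (x - c)) * indicator (cball c R) x \<partial>lborel) < \<infinity>"
proof -
  define B where "B = unit_ball_vol (real DIM(real^2))"
  have B0: "0 \<le> B" by (simp add: B_def)
  define f where "f k x = ennreal (2 ^ (k + 1) / R) * indicator (cball c (R / 2 ^ k)) x"
    for k :: nat and x :: "real^2"
  have "(\<integral>\<^sup>+x. ennreal (1 / norm (x - c)) * indicator (cball c R) x \<partial>lborel)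
      \<le> (\<integral>\<^sup>+x. (\<Sum>k. f k x) \<partial>lborel)"
    using inverse_norm_le_dyadic_sum[OF R] by (simp add: f_def nn_integral_mono)
  also have "\<dots> = (\<Sum>k. integral\<^sup>N lborel (f k))"
  proof (rule nn_integral_suminf)
    fix k
    have [measurable]: "cball c (R / 2 ^ k) \<in> sets borel" by simp
    show "f k \<in> borel_measurable lborel" unfolding f_def by measurable
  qed
  also have "\<dots> = (\<Sum>k. ennreal (2 * B * R * (1 / 2) ^ k))"
  proof (rule suminf_cong)
    fix k
    have "integral\<^sup>N lborel (f k) = ennreal (2 ^ (k + 1) / R) * emeasure lborel (cball c (R / 2 ^ k))"
      unfolding f_def by (simp add: nn_integral_cmult_indicator)
    also have "\<dots> = ennreal (2 ^ (k + 1) / R) * ennreal (B * (R / 2 ^ k) ^ 2)"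
      using R by (subst emeasure_cball) (auto simp: B_def)
    also have "\<dots> = ennreal (2 * B * R * (1 / 2) ^ k)"
      using R B0 by (simp add: ennreal_mult[symmetric] field_simps power2_eq_square power_mult_distrib
          power_one_over)
    finally show "integral\<^sup>N lborel (f k) = ennreal (2 * B * R * (1 / 2) ^ k)" .
  qed
  also have "\<dots> = ennreal (\<Sum>k. 2 * B * R * (1 / 2) ^ k)"
    using B0 R by (intro suminf_ennreal2) (auto intro: summable_mult summable_geometric)
  also have "\<dots> < \<infinity>" by simp
  finally show ?thesis .
qed

lemma ennreal_potential_le:
  assumes "0 \<le> A"
  shows "ennreal (potential n p A x) \<le> ennreal A + (\<Sum>i<n. ennreal (1 / norm (x - p i)))"
proof -
  have "1 / (2 * norm (x - p i)) \<le> 1 / norm (x - p i)" for i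
    by (cases "x = p i") (auto simp: field_simps)
  then show ?thesis
    using assms by (auto simp: potential_def sum_nonneg intro!: sum_mono ennreal_leI)
qed

lemma nn_integral_inverse_norms_cball_finite:
  fixes q :: "nat \<Rightarrow> real^2"
  assumes r: "0 < r"
  shows "(\<integral>\<^sup>+x. ennreal a * indicator (cball 0 r) x +
            (\<Sum>i<n. ennreal (1 / norm (x - q i)) * indicator (cball (q i) r) x) \<partial>lborel) < \<infinity>"
proof -
  have [measurable]: "cball (0::real^2) r \<in> sets borel" "cball (q i) r \<in> sets borel" for i
    by simp_all
  have m1: "(\<lambda>x. ennreal a * indicator (cball (0::real^2) r) x) \<in> borel_measurable lborel"
    by measurable
  have m2[measurable]: "(\<lambda>x. ennreal (1 / norm (x - q i)) * indicator (cball (q i) r) x)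
      \<in> borel_measurable lborel" for i
    by measurable
  have "(\<lambda>x. \<Sum>i<n. ennreal (1 / norm (x - q i)) * indicator (cball (q i) r) x) \<in> borel_measurable lborel"
    by measurable
  from nn_integral_add[OF m1 this]
  have "(\<integral>\<^sup>+x. ennreal a * indicator (cball 0 r) x +
            (\<Sum>i<n. ennreal (1 / norm (x - q i)) * indicator (cball (q i) r) x) \<partial>lborel)
      = ennreal a * emeasure lborel (cball (0::real^2) r) +
        (\<Sum>i<n. \<integral>\<^sup>+x. ennreal (1 / norm (x - q i)) * indicator (cball (q i) r) x \<partial>lborel)"
    by (simp only: nn_integral_sum[OF m2] nn_integral_cmult_indicator sets_lborel borel_closed closed_cball)
  then show ?thesis
    using r nn_integral_inverse_norm_cball_finite[of r] emeasure_lborel_cball_finite[of "0::real^2" r]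
    by (simp add: ennreal_mult_less_top)
qed

lemma potential_nn_integral_finite:
  assumes S: "bounded S" and A: "0 \<le> A"
  shows "(\<integral>\<^sup>+x\<in>S. ennreal (potential n p A x) \<partial>lebesgue) < \<infinity>"
proof -
  have "bounded (S \<union> p ` {..<n})" using S by (simp add: finite_imp_bounded)
  then obtain R where R: "0 < R" "\<forall>x\<in>S \<union> p ` {..<n}. norm x \<le> R"
    by (auto simp: bounded_pos)
  have S_ball: "S \<subseteq> cball 0 (2 * R)"
  proof
    fix x assume "x \<in> S"
    then have "norm x \<le> R" using R(2) by blast
    then show "x \<in> cball 0 (2 * R)" using R(1) by simp
  qed
  have S_sub: "S \<subseteq> cball (p i) (2 * R)" if "i < n" for i
  proof -
    have "norm (p i - x) \<le> 2 * R" if "x \<in> S" for x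
    proof -
      have "norm x \<le> R" "norm (p i) \<le> R" using R(2) \<open>i < n\<close> that by auto
      then show ?thesis using norm_triangle_ineq4[of "p i" x] by linarith
    qed
    then show ?thesis by (auto simp: dist_norm)
  qed
  define g where "g x = ennreal A * indicator (cball 0 (2 * R)) x +
      (\<Sum>i<n. ennreal (1 / norm (x - p i)) * indicator (cball (p i) (2 * R)) x)" for x :: "real^2"
  have "ennreal (potential n p A x) * indicator S x \<le> g x" for x
  proof (cases "x \<in> S")
    case True
    then have "\<forall>i<n. x \<in> cball (p i) (2 * R)" "x \<in> cball 0 (2 * R)" using S_ball S_sub by blast+
    then have "g x = ennreal A + (\<Sum>i<n. ennreal (1 / norm (x - p i)))" by (simp add: g_def)
    then show ?thesis using ennreal_potential_le[OF A, of n p x] True by simp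
  qed simp
  then have "(\<integral>\<^sup>+x\<in>S. ennreal (potential n p A x) \<partial>lebesgue) \<le> integral\<^sup>N lebesgue g"
    by (intro nn_integral_mono)
  also have "\<dots> = integral\<^sup>N lborel g" by (rule nn_integral_completion)
  also have "\<dots> < \<infinity>"
    unfolding g_def using nn_integral_inverse_norms_cball_finite[of "2 * R"] R(1) by simp
  finally show ?thesis .
qed

lemma potential_nn_integral_subset_bound:
  assumes "bounded S" "0 \<le> A"
  obtains M where "0 \<le> M" "\<And>T. T \<subseteq> S \<Longrightarrow> (\<integral>\<^sup>+x\<in>T. ennreal (potential n p A x) \<partial>lebesgue) \<le> ennreal M"
proof
  let ?I = "\<lambda>T. \<integral>\<^sup>+x\<in>T. ennreal (potential n p A x) \<partial>lebesgue"
  show "0 \<le> enn2real (?I S)" by simp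
  fix T assume "T \<subseteq> S"
  then have "?I T \<le> ?I S" by (auto intro!: nn_integral_mono simp: indicator_def)
  also have "?I S = ennreal (enn2real (?I S))"
    using potential_nn_integral_finite[OF assms] by (simp add: less_top)
  finally show "?I T \<le> ennreal (enn2real (?I S))" .
qed

theorem mainTheorem4:
  fixes n :: nat and p :: "nat \<Rightarrow> real^2" and A :: real and b :: "nat \<Rightarrow> real"
    and phibar :: "real^2 \<Rightarrow> real" and Ut :: "real \<Rightarrow> (real^2) set"
    and phi :: "real \<Rightarrow> real^2 \<Rightarrow> real"
  assumes poly: "ccw_convex_polygon n p"
    and A: "A \<ge> 0"
    and bdry: "extends_boundary_data n p b phibar"
    and lip: "\<exists>L. L-lipschitz_on (closure (polygon_interior n p)) phibar"
    and fam: "smooth_expanding_family Ut (polygon_interior n p)"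
    and cont: "\<forall>t\<in>{0<..<1}. continuous_on (closure (Ut t)) (phi t)"
    and cvx: "\<forall>t\<in>{0<..<1}. convex_on (closure (Ut t)) (phi t)"
    and MA: "\<forall>t\<in>{0<..<1}. alexandrov_MA (phi t) (potential n p A) (Ut t)"
    and bc: "\<forall>t\<in>{0<..<1}. \<forall>x\<in>frontier (Ut t). phi t x = phibar x"
  shows "\<exists>C. \<forall>t\<in>{0<..<1}. \<forall>u\<in>Ut t.
           phi t u \<ge> phibar u - C * sqrt (infdist u (frontier (polygon_interior n p)))"
proof -
  define U where "U = polygon_interior n p"
  note U = polygon_interior_open_bounded[of n p, folded U_def]
  obtain K where K: "0 \<le> K" "boundary_affine_minorants K U phibar"
    using lip polygon_boundary_affine_minorants[OF poly bdry] by (auto simp: U_def)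
  define D where "D = diameter (closure U)"
  have D: "\<forall>x\<in>closure U. \<forall>y\<in>closure U. dist x y \<le> D"
    using diameter_bounded_bound[OF bounded_closure[OF U(2)]] by (simp add: D_def)
  obtain M where M: "0 \<le> M"
    "\<And>T. T \<subseteq> U \<Longrightarrow> (\<integral>\<^sup>+x\<in>T. ennreal (potential n p A x) \<partial>lebesgue) \<le> ennreal M"
    using potential_nn_integral_subset_bound[OF U(2) A] by blast
  have "phibar u - (K * sqrt D + sqrt (8 * D * M)) * sqrt (infdist u (frontier U)) \<le> phi t u"
    if t: "t \<in> {0<..<1}" and u: "u \<in> Ut t" for t u
  proof -
    have Ut: "open (Ut t)" "convex (Ut t)" "Ut t \<subseteq> U"
      using fam t by (auto simp: smooth_expanding_family_def strictly_convex_domain_def U_def)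
    have "Ut t \<noteq> {}" using u by blast
    note image = alexandrov_MA_subdiff_image[OF MA[rule_format, OF t] Ut(1) this
        potential_borel_measurable ballI[OF potential_pos[OF poly A]]]
    show ?thesis
      using cont bc t image(2) M(2)[OF Ut(3)]
      by (intro lower_bound_from_boundary_minorants[OF U D K Ut u _ _ image(1) M(1)]) auto
  qed
  then show ?thesis unfolding U_def by blast
qed

end
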